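(* Let $d\ge 1$, let $p=p_d=\frac{2d+1}{4d}$, and let $(S_n)$ be the $d$-dimensional elephant random walk with memory parameter $p$ described in the context. Then $$\lim_{n\to\infty}\frac{1}{\sqrt n\,\log n}S_n=0\quad\text{a.s.}$$
   Context: Multi-dimensional elephant random walk (MERW). Fix a dimension $d\ge1$ and a memory parameter $p\in[0,1]$. Let $(e_1,\dots,e_d)$ be the standard basis of $\mathbb{R}^d$, $I_d$ the $d\times d$ identity matrix, and $J_d$ the $d\times d$ cyclic permutation matrix with entries $(J_d)_{i,i+1}=1$ for $1\le i\le d-1$, $(J_d)_{d,1}=1$, and all other entries $0$. Set $S_0=0$. The first step $X_1$ is uniformly distributed on $\{\pm e_1,\dots,\pm e_d\}$. For $n\ge1$, given $\mathcal{F}_n=\sigma(X_1,\dots,X_n)$, $X_{n+1}=A_nX_{b_n}$, where $b_n$ is uniform on $\{1,\dots,n\}$ and $A_n$ is a random matrix, with $b_n$, $A_n$ independent of each other and of $\mathcal{F}_n$, equal to $I_d$ with probability $p$ and to each of $-I_d,\ \pm J_d,\dots,\pm J_d^{d-1}$ with probability $\frac{1-p}{2d-1}$. The position is $S_n=X_1+\dots+X_n$. *)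

theory Defs
  imports "HOL-Probability.Probability"
begin

text \<open>Vectors of R^d are represented as functions nat => real, coordinates 0..d-1
  (coordinate i corresponds to e_(i+1) of the paper); d x d matrices as
  nat => nat => real with indices 0..d-1.\<close>

type_synonym vec = "nat \<Rightarrow> real"
type_synonym mat = "nat \<Rightarrow> nat \<Rightarrow> real"

definition basis_vec :: "nat \<Rightarrow> vec" where
  "basis_vec j = (\<lambda>i. if i = j then 1 else 0)"

definition id_mat :: "nat \<Rightarrow> mat" where
  "id_mat d = (\<lambda>i j. if i = j \<and> i < d then 1 else 0)"

definition cyc_mat :: "nat \<Rightarrow> mat" where
  "cyc_mat d = (\<lambda>i j. if i < d \<and> j = (i + 1) mod d then 1 else 0)"

definition mat_mult :: "nat \<Rightarrow> mat \<Rightarrow> mat \<Rightarrow> mat" where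
  "mat_mult d A B = (\<lambda>i j. \<Sum>l<d. A i l * B l j)"

fun mat_pow :: "nat \<Rightarrow> mat \<Rightarrow> nat \<Rightarrow> mat" where
  "mat_pow d A 0 = id_mat d"
| "mat_pow d A (Suc k) = mat_mult d A (mat_pow d A k)"

definition mat_scale :: "real \<Rightarrow> mat \<Rightarrow> mat" where
  "mat_scale c A = (\<lambda>i j. c * A i j)"

definition mat_vec :: "nat \<Rightarrow> mat \<Rightarrow> vec \<Rightarrow> vec" where
  "mat_vec d A v = (\<lambda>i. \<Sum>j<d. A i j * v j)"

definition vnorm :: "nat \<Rightarrow> vec \<Rightarrow> real" where
  "vnorm d v = sqrt (\<Sum>i<d. (v i)\<^sup>2)"

definition first_pmf :: "nat \<Rightarrow> vec pmf" where
  "first_pmf d = pmf_of_set {(\<lambda>i. s * basis_vec j i) | s j. s \<in> {-1, 1} \<and> j < d}"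

text \<open>Law of A_n: I_d with probability p, and each of -I_d, +-J_d, ..., +-J_d^(d-1)
  (2d-1 matrices, indexed by (sign, power)) with probability (1-p)/(2d-1).\<close>
definition A_pmf :: "nat \<Rightarrow> real \<Rightarrow> mat pmf" where
  "A_pmf d p = do {
     c \<leftarrow> bernoulli_pmf p;
     if c then return_pmf (id_mat d)
     else map_pmf (\<lambda>(s, k). mat_scale s (mat_pow d (cyc_mat d) k))
            (pmf_of_set ({(-1, 0)} \<union> ({-1, 1} \<times> {1..<d})))
   }"

text \<open>Innovation at time n >= 1: the pair (b_n, A_n), independent, b_n uniform on {1..n}.
  (Index 0 is unused; it is given a harmless well-defined law.)\<close>
definition step_pmf :: "nat \<Rightarrow> real \<Rightarrow> nat \<Rightarrow> (nat \<times> mat) pmf" where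
  "step_pmf d p n = pair_pmf (pmf_of_set {1..max 1 n}) (A_pmf d p)"

definition merw_space :: "nat \<Rightarrow> real \<Rightarrow> (vec \<times> (nat \<Rightarrow> nat \<times> mat)) measure" where
  "merw_space d p = measure_pmf (first_pmf d) \<Otimes>\<^sub>M (\<Pi>\<^sub>M n\<in>UNIV. measure_pmf (step_pmf d p n))"

text \<open>merw_steps d w n = [X_1, ..., X_n], with X_(n+1) = A_n X_(b_n).\<close>
fun merw_steps :: "nat \<Rightarrow> vec \<times> (nat \<Rightarrow> nat \<times> mat) \<Rightarrow> nat \<Rightarrow> vec list" where
  "merw_steps d w 0 = []"
| "merw_steps d w (Suc 0) = [fst w]"
| "merw_steps d w (Suc (Suc n)) =
     (let xs = merw_steps d w (Suc n); (b, A) = snd w (Suc n)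
      in xs @ [mat_vec d A (xs ! (b - 1))])"

definition merw_pos :: "nat \<Rightarrow> vec \<times> (nat \<Rightarrow> nat \<times> mat) \<Rightarrow> nat \<Rightarrow> vec" where
  "merw_pos d w n = (\<lambda>i. \<Sum>x\<leftarrow>merw_steps d w n. x i)"

end

theory Submission
  imports Defs "HOL-Probability.Hoeffding" "HOL-Real_Asymp.Real_Asymp"
begin

text \<open>At p = p_crit d the mean of A_n is I_d/2, so the conditional mean of X_(n+1) given the past
  is S_n/(2n), and every coordinate of S_n divided by Gamma_n = prod_(1<=k<n) (1 + 1/(2k)) is a
  martingale Z_n. Its increments have range at most 2/Gamma_(n+1) and
  1/Gamma_(n+1)^2 <= 1/(n+1), so by Hoeffding's lemma Z_n - Z_m is sub-Gaussian with variance
  proxy sum_(m<k<=n) 1/k. Borel-Cantelli along dyadic blocks then gives Z_n = o(log n) almost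
  surely, and Gamma_n <= sqrt(2n) finishes the proof coordinatewise.\<close>

section \<open>Signed unit vectors and the random matrices\<close>

definition signed_unit :: "nat \<Rightarrow> vec \<Rightarrow> bool" where
  "signed_unit d v \<longleftrightarrow> (\<exists>s l. (s = 1 \<or> s = -1) \<and> l < d \<and> v = (\<lambda>i. s * basis_vec l i))"

lemma signed_unit_abs_le_1: "signed_unit d v \<Longrightarrow> \<bar>v i\<bar> \<le> 1"
  unfolding signed_unit_def basis_vec_def by auto

lemma mat_vec_mat_mult: "mat_vec d (mat_mult d A B) v = mat_vec d A (mat_vec d B v)"
proof
  fix i
  have "mat_vec d (mat_mult d A B) v i = (\<Sum>j<d. \<Sum>l<d. A i l * (B l j * v j))"
    by (simp add: mat_vec_def mat_mult_def sum_distrib_right mult.assoc)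
  also have "\<dots> = (\<Sum>l<d. \<Sum>j<d. A i l * (B l j * v j))"
    by (rule sum.swap)
  also have "\<dots> = mat_vec d A (mat_vec d B v) i"
    by (simp add: mat_vec_def sum_distrib_left)
  finally show "mat_vec d (mat_mult d A B) v i = mat_vec d A (mat_vec d B v) i" .
qed

lemma mat_vec_mat_scale: "mat_vec d (mat_scale c A) v = (\<lambda>i. c * mat_vec d A v i)"
  by (simp add: mat_vec_def mat_scale_def sum_distrib_left mult.assoc)

lemma mat_vec_cmult: "mat_vec d A (\<lambda>i. c * v i) = (\<lambda>i. c * mat_vec d A v i)"
  by (simp add: mat_vec_def sum_distrib_left mult.left_commute)

lemma mat_vec_id_mat:
  assumes "\<And>j. d \<le> j \<Longrightarrow> v j = 0"
  shows "mat_vec d (id_mat d) v = v"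
proof
  fix i
  show "mat_vec d (id_mat d) v i = v i"
    using assms[of i]
    by (cases "i < d") (simp_all add: mat_vec_def id_mat_def if_distrib if_distribR cong: if_cong)
qed

lemma mat_vec_cyc_mat_basis:
  assumes "l < d"
  shows "mat_vec d (cyc_mat d) (basis_vec l) = basis_vec ((l + d - 1) mod d)"
proof
  fix i
  have pred: "(l + d - 1) mod d = (if l = 0 then d - 1 else l - 1)"
    using assms by (cases l) auto
  have succ: "(i + 1) mod d = (if i + 1 < d then i + 1 else 0)" if "i < d"
    using that by (auto dest: Suc_lessI)
  have "mat_vec d (cyc_mat d) (basis_vec l) i = (if i < d then basis_vec l ((i + 1) mod d) else 0)"
    using assms by (simp add: mat_vec_def cyc_mat_def if_distrib if_distribR sum.delta'
        conj_commute[of "i < d"] cong: if_cong del: if_image_distrib)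
  also have "\<dots> = basis_vec ((l + d - 1) mod d) i"
    using assms pred succ by (cases "i + 1 < d") (auto simp: basis_vec_def)
  finally show "mat_vec d (cyc_mat d) (basis_vec l) i = basis_vec ((l + d - 1) mod d) i" .
qed

lemma mat_vec_cyc_pow_basis:
  assumes "l < d"
  shows "\<exists>l'<d. mat_vec d (mat_pow d (cyc_mat d) k) (basis_vec l) = basis_vec l'"
proof (induction k)
  case 0
  then show ?case
    using assms by (auto intro!: mat_vec_id_mat simp: basis_vec_def)
next
  case (Suc k)
  then obtain l' where "l' < d" "mat_vec d (mat_pow d (cyc_mat d) k) (basis_vec l) = basis_vec l'"
    by blast
  then show ?case
    by (intro exI[of _ "(l' + d - 1) mod d"]) (simp add: mat_vec_mat_mult mat_vec_cyc_mat_basis)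
qed

definition sign_power_index :: "nat \<Rightarrow> (real \<times> nat) set" where
  "sign_power_index d = {(-1, 0)} \<union> ({-1, 1} \<times> {1..<d})"

lemma finite_sign_power_index: "finite (sign_power_index d)"
  and sign_power_index_nonempty: "sign_power_index d \<noteq> {}"
  by (auto simp: sign_power_index_def)

lemma card_sign_power_index: "d \<ge> 1 \<Longrightarrow> real (card (sign_power_index d)) = 2 * real d - 1"
  unfolding sign_power_index_def by (simp add: card_cartesian_product of_nat_diff)

lemma sum_sign_power_index: "(\<Sum>(s, k)\<in>sign_power_index d. s * f k) = - f 0"
proof -
  have "(\<Sum>(s, k)\<in>{-1::real, 1} \<times> {1..<d}. s * f k) = 0"
    by (simp add: sum.cartesian_product[symmetric] sum_negf)
  then show ?thesis
    unfolding sign_power_index_def by simp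
qed

lemma A_pmf_eq:
  "A_pmf d p = bernoulli_pmf p \<bind> (\<lambda>c. if c then return_pmf (id_mat d)
    else map_pmf (\<lambda>(s, k). mat_scale s (mat_pow d (cyc_mat d) k))
      (pmf_of_set (sign_power_index d)))"
  unfolding A_pmf_def sign_power_index_def by simp

lemma finite_set_A_pmf: "finite (set_pmf (A_pmf d p))"
  unfolding A_pmf_eq set_bind_pmf
  by (rule finite_UN_I) (auto simp: finite_sign_power_index sign_power_index_nonempty)

lemma A_pmf_elem_cases:
  assumes "A \<in> set_pmf (A_pmf d p)"
  obtains "A = id_mat d" | s k where "s = 1 \<or> s = -1" "A = mat_scale s (mat_pow d (cyc_mat d) k)"
  using assms
  by (auto simp: A_pmf_eq set_pmf_of_set[OF sign_power_index_nonempty finite_sign_power_index]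
      sign_power_index_def split: if_splits) (metis mat_pow.simps(1))

lemma signed_unit_mat_vec_A_pmf:
  assumes "A \<in> set_pmf (A_pmf d p)" and "signed_unit d v"
  shows "signed_unit d (mat_vec d A v)"
proof -
  obtain s l where sl: "s = 1 \<or> s = -1" "l < d" "v = (\<lambda>i. s * basis_vec l i)"
    using assms(2) unfolding signed_unit_def by blast
  from assms(1) show ?thesis
  proof (cases rule: A_pmf_elem_cases)
    case 1
    then show ?thesis
      using assms(2) sl by (simp add: mat_vec_id_mat basis_vec_def)
  next
    case (2 t k)
    obtain l' where "l' < d" "mat_vec d (mat_pow d (cyc_mat d) k) (basis_vec l) = basis_vec l'"
      using mat_vec_cyc_pow_basis[OF sl(2)] by blast
    then have "mat_vec d A v = (\<lambda>i. (t * s) * basis_vec l' i)"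
      using 2 sl by (simp add: mat_vec_mat_scale mat_vec_cmult mult_ac)
    then show ?thesis
      using 2 sl \<open>l' < d\<close> unfolding signed_unit_def by (intro exI[of _ "t * s"] exI[of _ l']) auto
  qed
qed

text \<open>The parameter a of the paper: the mean of A_n is a I_d.\<close>

definition memory_drift :: "nat \<Rightarrow> real \<Rightarrow> real" where
  "memory_drift d p = (2 * real d * p - 1) / (2 * real d - 1)"

abbreviation p_crit :: "nat \<Rightarrow> real" where
  "p_crit d \<equiv> (2 * real d + 1) / (4 * real d)"

lemma p_crit_bounds: "d \<ge> 1 \<Longrightarrow> 0 \<le> p_crit d \<and> p_crit d \<le> 1"
  by (simp add: field_simps)

lemma memory_drift_p_crit: "d \<ge> 1 \<Longrightarrow> memory_drift d (p_crit d) = 1 / 2"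
  by (simp add: memory_drift_def field_simps)

lemma A_pmf_expectation_entry:
  assumes d: "d \<ge> 1" and p: "0 \<le> p" "p \<le> 1"
  shows "measure_pmf.expectation (A_pmf d p) (\<lambda>A. A i j) = memory_drift d p * id_mat d i j"
proof -
  let ?C = "\<lambda>c. if c then return_pmf (id_mat d)
    else map_pmf (\<lambda>(s, k). mat_scale s (mat_pow d (cyc_mat d) k)) (pmf_of_set (sign_power_index d))"
  have "measure_pmf.expectation (A_pmf d p) (\<lambda>A. A i j) =
      (\<Sum>c\<in>UNIV. pmf (bernoulli_pmf p) c *\<^sub>R measure_pmf.expectation (?C c) (\<lambda>A. A i j))"
    unfolding A_pmf_eq
    by (rule pmf_expectation_bind) (auto simp: finite_sign_power_index sign_power_index_nonempty)
  also have "\<dots> = p * id_mat d i j + (1 - p) *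
      ((\<Sum>(s, k)\<in>sign_power_index d. s * mat_pow d (cyc_mat d) k i j) / card (sign_power_index d))"
    using p by (simp add: UNIV_bool mat_scale_def case_prod_unfold
        integral_pmf_of_set[OF sign_power_index_nonempty finite_sign_power_index])
  also have "\<dots> = memory_drift d p * id_mat d i j"
    using d by (simp add: sum_sign_power_index card_sign_power_index memory_drift_def field_simps)
  finally show ?thesis .
qed

lemma A_pmf_expectation_mat_vec:
  assumes "d \<ge> 1" "0 \<le> p" "p \<le> 1" and "i < d"
  shows "measure_pmf.expectation (A_pmf d p) (\<lambda>A. mat_vec d A v i) = memory_drift d p * v i"
proof -
  have "measure_pmf.expectation (A_pmf d p) (\<lambda>A. mat_vec d A v i) =
      (\<Sum>j<d. measure_pmf.expectation (A_pmf d p) (\<lambda>A. A i j) * v j)"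
    unfolding mat_vec_def
    by (subst Bochner_Integration.integral_sum)
       (auto intro: integrable_measure_pmf_finite finite_set_A_pmf)
  also have "\<dots> = memory_drift d p * v i"
    using assms
    by (simp add: A_pmf_expectation_entry id_mat_def if_distrib if_distribR sum.delta cong: if_cong)
  finally show ?thesis .
qed

section \<open>Paths of the walk\<close>

definition merw_next :: "nat \<Rightarrow> vec \<times> (nat \<Rightarrow> nat \<times> mat) \<Rightarrow> nat \<Rightarrow> vec" where
  "merw_next d w n = mat_vec d (snd (snd w n)) (merw_steps d w n ! (fst (snd w n) - 1))"

lemma merw_steps_Suc: "n \<ge> 1 \<Longrightarrow> merw_steps d w (Suc n) = merw_steps d w n @ [merw_next d w n]"
  by (cases n) (auto simp: merw_next_def Let_def split: prod.split)

lemma length_merw_steps [simp]: "length (merw_steps d w n) = n"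
proof (induction n)
  case (Suc n)
  then show ?case
    by (cases "n = 0") (simp_all add: merw_steps_Suc)
qed simp

lemma nth_merw_steps_Suc:
  "n \<ge> 1 \<Longrightarrow> j \<le> n \<Longrightarrow>
    merw_steps d w (Suc n) ! j = (if j < n then merw_steps d w n ! j else merw_next d w n)"
  by (simp add: merw_steps_Suc nth_append)

lemma merw_steps_cong:
  "fst w = fst w' \<Longrightarrow> (\<And>j. j < n \<Longrightarrow> snd w j = snd w' j) \<Longrightarrow> merw_steps d w n = merw_steps d w' n"
proof (induction n)
  case (Suc n)
  then show ?case
    by (cases "n = 0") (simp_all add: merw_steps_Suc merw_next_def)
qed simp

lemma merw_pos_eq_sum: "merw_pos d w n i = (\<Sum>j<n. (merw_steps d w n ! j) i)"
  unfolding merw_pos_def by (simp add: sum_list_sum_nth atLeast0LessThan)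

lemma merw_pos_Suc: "n \<ge> 1 \<Longrightarrow> merw_pos d w (Suc n) i = merw_pos d w n i + merw_next d w n i"
  by (simp add: merw_pos_def merw_steps_Suc)

definition resample :: "'a \<times> ('i \<Rightarrow> 'b) \<Rightarrow> 'i \<Rightarrow> 'b \<Rightarrow> 'a \<times> ('i \<Rightarrow> 'b)" where
  "resample w n y = (fst w, (snd w)(n := y))"

lemma merw_steps_resample: "k \<le> n \<Longrightarrow> merw_steps d (resample w n y) k = merw_steps d w k"
  by (rule merw_steps_cong) (auto simp: resample_def)

lemma merw_pos_resample: "k \<le> n \<Longrightarrow> merw_pos d (resample w n y) k = merw_pos d w k"
  by (simp add: merw_pos_def merw_steps_resample)

lemma merw_next_resample:
  "merw_next d (resample w n y) n = mat_vec d (snd y) (merw_steps d w n ! (fst y - 1))"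
  by (simp add: merw_next_def merw_steps_resample) (simp add: resample_def)

lemma step_pmf_expectation_next:
  assumes "d \<ge> 1" "0 \<le> p" "p \<le> 1" and "i < d" and n: "n \<ge> 1"
  shows "measure_pmf.expectation (step_pmf d p n) (\<lambda>y. mat_vec d (snd y) (xs ! (fst y - 1)) i) =
    memory_drift d p * (\<Sum>j<n. (xs ! j) i) / n"
proof -
  have "measure_pmf.expectation (step_pmf d p n) (\<lambda>y. mat_vec d (snd y) (xs ! (fst y - 1)) i) =
      (\<Sum>b\<in>{1..n}. measure_pmf.expectation (map_pmf (Pair b) (A_pmf d p))
        (\<lambda>y. mat_vec d (snd y) (xs ! (fst y - 1)) i) /\<^sub>R real (card {1..n}))"
    unfolding step_pmf_def pair_pmf_def map_pmf_def[symmetric] using n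
    by (subst pmf_expectation_bind_pmf_of_set) (auto simp: max_def finite_set_A_pmf)
  also have "\<dots> = (\<Sum>b\<in>{1..n}. memory_drift d p * (xs ! (b - 1)) i / n)"
    using assms by (simp add: A_pmf_expectation_mat_vec divide_inverse_commute)
  also have "\<dots> = memory_drift d p * (\<Sum>j<n. (xs ! j) i) / n"
    by (simp add: sum.atLeast1_atMost_eq sum_distrib_left sum_divide_distrib)
  finally show ?thesis .
qed

definition in_merw_support :: "nat \<Rightarrow> real \<Rightarrow> vec \<times> (nat \<Rightarrow> nat \<times> mat) \<Rightarrow> bool" where
  "in_merw_support d p w \<longleftrightarrow>
    fst w \<in> set_pmf (first_pmf d) \<and> (\<forall>n. snd w n \<in> set_pmf (step_pmf d p n))"

lemma set_first_pmf:
  "d \<ge> 1 \<Longrightarrow> set_pmf (first_pmf d) = {(\<lambda>i. s * basis_vec j i) | s j. s \<in> {-1, 1} \<and> j < d}"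
proof -
  have "{(\<lambda>i. s * basis_vec j i) | s j. s \<in> {-1, 1} \<and> j < d} =
      (\<lambda>(s, j). (\<lambda>i. s * basis_vec j i)) ` ({-1::real, 1} \<times> {..<d})"
    by auto
  then show "d \<ge> 1 \<Longrightarrow> ?thesis"
    unfolding first_pmf_def by (intro set_pmf_of_set) (auto simp: lessThan_empty_iff)
qed

lemma set_step_pmf: "set_pmf (step_pmf d p n) = {1..max 1 n} \<times> set_pmf (A_pmf d p)"
  by (simp add: step_pmf_def set_pmf_of_set)

lemma signed_unit_merw_steps:
  assumes "d \<ge> 1" "in_merw_support d p w"
  shows "j < n \<Longrightarrow> signed_unit d (merw_steps d w n ! j)"
proof (induction n arbitrary: j)
  case (Suc n)
  show ?case
  proof (cases "n = 0")
    case True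
    then show ?thesis
      using Suc assms by (auto simp: in_merw_support_def set_first_pmf signed_unit_def)
  next
    case False
    have "max 1 n = n"
      using False by simp
    then have "snd w n \<in> {1..n} \<times> set_pmf (A_pmf d p)"
      using assms by (metis in_merw_support_def set_step_pmf)
    then have "signed_unit d (merw_next d w n)"
      unfolding merw_next_def using Suc.IH
      by (intro signed_unit_mat_vec_A_pmf) (auto simp: mem_Times_iff)
    then show ?thesis
      using Suc False by (simp add: nth_merw_steps_Suc)
  qed
qed simp

section \<open>The probability space\<close>

lemma measurable_resample:
  "(\<lambda>(w, y). resample w n y) \<in> measurable ((M0 \<Otimes>\<^sub>M PiM UNIV M) \<Otimes>\<^sub>M M n) (M0 \<Otimes>\<^sub>M PiM UNIV M)"
proof -
  have "(\<lambda>z. (snd (fst z)) (n := snd z)) \<in> measurable ((M0 \<Otimes>\<^sub>M PiM UNIV M) \<Otimes>\<^sub>M M n) (PiM UNIV M)"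
    by (rule measurable_fun_upd[where J = UNIV]) auto
  then show ?thesis
    unfolding resample_def case_prod_unfold by (intro measurable_Pair) auto
qed

text \<open>Resampling the n-th innovation independently preserves the law; integrating it out is how
  conditional expectations given X_1, ..., X_n are computed below.\<close>

lemma nn_integral_resample:
  fixes F :: "'a \<times> ('i \<Rightarrow> 'b) \<Rightarrow> ennreal"
  assumes "prob_space M0" and M: "\<And>i. prob_space (M i)"
    and F[measurable]: "F \<in> borel_measurable (M0 \<Otimes>\<^sub>M PiM UNIV M)"
  shows "(\<integral>\<^sup>+ w. F w \<partial>(M0 \<Otimes>\<^sub>M PiM UNIV M)) =
    (\<integral>\<^sup>+ w. (\<integral>\<^sup>+ y. F (resample w n y) \<partial>M n) \<partial>(M0 \<Otimes>\<^sub>M PiM UNIV M))"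
proof -
  interpret A: pair_prob_space M0 "PiM UNIV M"
    using assms by (simp add: pair_prob_space_def pair_sigma_finite_def prob_space_PiM
        prob_space_imp_sigma_finite)
  interpret B: pair_prob_space "M n" "PiM UNIV M"
    using assms by (simp add: pair_prob_space_def pair_sigma_finite_def prob_space_PiM
        prob_space_imp_sigma_finite)
  have upd[measurable]: "(\<lambda>(y, X). X(n := y)) \<in> measurable (M n \<Otimes>\<^sub>M PiM UNIV M) (PiM UNIV M)"
    unfolding case_prod_unfold by (rule measurable_fun_upd[where J = UNIV]) auto
  have G: "(\<lambda>w. \<integral>\<^sup>+ y. F (resample w n y) \<partial>M n) \<in> borel_measurable (M0 \<Otimes>\<^sub>M PiM UNIV M)"
    using measurable_compose[OF measurable_resample F]
    by (intro B.M1.borel_measurable_nn_integral) (simp add: case_prod_unfold)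
  have inner: "(\<integral>\<^sup>+ X. F (x, X) \<partial>PiM UNIV M) =
      (\<integral>\<^sup>+ X. (\<integral>\<^sup>+ y. F (resample (x, X) n y) \<partial>M n) \<partial>PiM UNIV M)" if "x \<in> space M0" for x
  proof -
    have Fx: "(\<lambda>X. F (x, X)) \<in> borel_measurable (PiM UNIV M)"
      using F that by (rule measurable_Pair2)
    have "(\<integral>\<^sup>+ X. F (x, X) \<partial>PiM UNIV M) =
        (\<integral>\<^sup>+ z. F (x, (case z of (y, X) \<Rightarrow> X(n := y))) \<partial>(M n \<Otimes>\<^sub>M PiM UNIV M))"
      using nn_integral_distr[OF upd, of "\<lambda>X. F (x, X)"] distr_pair_PiM_eq_PiM[of UNIV M n] M Fx
      by (simp only: measurable_distr_eq1 insert_UNIV simp_thms)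
    also have "\<dots> = (\<integral>\<^sup>+ X. (\<integral>\<^sup>+ y. F (x, X(n := y)) \<partial>M n) \<partial>PiM UNIV M)"
      using that by (subst B.nn_integral_snd[symmetric]) (auto simp: case_prod_unfold)
    finally show ?thesis
      by (simp add: resample_def)
  qed
  have "(\<integral>\<^sup>+ w. F w \<partial>(M0 \<Otimes>\<^sub>M PiM UNIV M)) = (\<integral>\<^sup>+ x. \<integral>\<^sup>+ X. F (x, X) \<partial>PiM UNIV M \<partial>M0)"
    by (rule A.M2.nn_integral_fst[OF F, symmetric])
  also have "\<dots> = (\<integral>\<^sup>+ x. \<integral>\<^sup>+ X. (\<integral>\<^sup>+ y. F (resample (x, X) n y) \<partial>M n) \<partial>PiM UNIV M \<partial>M0)"
    by (rule nn_integral_cong) (simp add: inner)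
  also have "\<dots> = (\<integral>\<^sup>+ w. (\<integral>\<^sup>+ y. F (resample w n y) \<partial>M n) \<partial>(M0 \<Otimes>\<^sub>M PiM UNIV M))"
    using A.M2.nn_integral_fst[OF G] by simp
  finally show ?thesis .
qed

lemma prob_space_merw_space: "prob_space (merw_space d p)"
  unfolding merw_space_def
  by (intro prob_space_pair prob_space_measure_pmf prob_space_PiM)

lemma measurable_merw_innovation[measurable]:
  "(\<lambda>w. snd w n) \<in> measurable (merw_space d p) (measure_pmf (step_pmf d p n))"
  unfolding merw_space_def
  by (rule measurable_compose[OF measurable_snd measurable_component_singleton]) simp

lemma measurable_merw_first[measurable]:
  "fst \<in> measurable (merw_space d p) (measure_pmf (first_pmf d))"
  unfolding merw_space_def by simp

lemma measurable_merw_steps: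
  "j < n \<Longrightarrow> (\<lambda>w. (merw_steps d w n ! j) l) \<in> borel_measurable (merw_space d p)"
proof (induction n arbitrary: j l)
  case (Suc n)
  consider "n = 0" | "n \<noteq> 0" "j < n" | "n \<noteq> 0" "j = n"
    using Suc.prems by linarith
  then show ?case
  proof cases
    case 1
    then show ?thesis
      using Suc.prems measurable_compose[OF measurable_merw_first, of "\<lambda>x. x l"] by simp
  next
    case 2
    then show ?thesis
      using Suc.IH by (simp add: nth_merw_steps_Suc)
  next
    case 3
    have "(\<lambda>w. (merw_steps d w n ! (k - 1)) m) \<in> borel_measurable (merw_space d p)" for k m
    proof (cases "k - 1 < n")
      case False
      \<comment> \<open>out of range, \<open>!\<close> returns the same unspecified value for every w\<close>
      then show ?thesis
        using nth_append[of "merw_steps d _ n" "[]" "k - 1"] by simp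
    qed (use Suc.IH in blast)
    moreover have "(\<lambda>w. fst (snd w n)) \<in> measurable (merw_space d p) (count_space UNIV)"
      by (rule measurable_compose[OF measurable_merw_innovation]) simp
    ultimately have sel:
      "(\<lambda>w. (merw_steps d w n ! (fst (snd w n) - 1)) m) \<in> borel_measurable (merw_space d p)" for m
      by (rule measurable_compose_countable[where f = "\<lambda>k w. (merw_steps d w n ! (k - 1)) m"])
    have "(\<lambda>w. merw_next d w n l) \<in> borel_measurable (merw_space d p)"
      unfolding merw_next_def mat_vec_def
      by (intro borel_measurable_sum borel_measurable_times sel
          measurable_compose[OF measurable_merw_innovation]) simp
    then show ?thesis
      using 3 by (simp add: nth_merw_steps_Suc)
  qed
qed simp

lemma measurable_merw_pos[measurable]:
  "(\<lambda>w. merw_pos d w n i) \<in> borel_measurable (merw_space d p)"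
  unfolding merw_pos_eq_sum by (intro borel_measurable_sum measurable_merw_steps) auto

lemma AE_in_merw_support: "AE w in merw_space d p. in_merw_support d p w"
proof -
  interpret pair_prob_space "measure_pmf (first_pmf d)"
    "PiM UNIV (\<lambda>n. measure_pmf (step_pmf d p n))"
    by (simp add: pair_prob_space_def pair_sigma_finite_def prob_space_PiM prob_space_measure_pmf
        prob_space_imp_sigma_finite)
  have "AE w in merw_space d p. fst w \<in> set_pmf (first_pmf d)"
    unfolding merw_space_def
    by (rule AE_pair_measure) (auto simp: AE_measure_pmf sets_pair_measure_cong)
  moreover have "AE w in merw_space d p. snd w n \<in> set_pmf (step_pmf d p n)" for n
    unfolding merw_space_def
    by (rule AE_pair_measure)
      (auto intro!: AE_PiM_component simp: AE_measure_pmf prob_space_measure_pmf)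
  ultimately show ?thesis
    unfolding in_merw_support_def by (simp add: AE_all_countable)
qed

section \<open>Sub-Gaussian increments and logarithmic growth\<close>

lemma nn_integral_exp_centered_pmf_le:
  fixes P :: "'a pmf" and h :: "'a \<Rightarrow> real"
  assumes "\<And>y. y \<in> set_pmf P \<Longrightarrow> \<bar>h y - c\<bar> \<le> r" and l: "l > 0"
  shows "(\<integral>\<^sup>+ y. ennreal (exp (l * (h y - measure_pmf.expectation P h))) \<partial>P)
    \<le> ennreal (exp (l\<^sup>2 * r\<^sup>2 / 2))"
proof -
  have "h y \<in> {c - r..c + r}" if "y \<in> set_pmf P" for y
    using assms(1)[OF that] by (auto simp: abs_le_iff)
  then have "AE y in P. h y \<in> {c - r..c + r}"
    by (simp add: AE_measure_pmf_iff)
  then interpret interval_bounded_random_variable "measure_pmf P" h "c - r" "c + r"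
    by unfold_locales simp_all
  show ?thesis
    using Hoeffdings_lemma_nn_integral[OF l] by (simp add: power2_eq_square mult.assoc)
qed

lemma (in prob_space) prob_ge_le_of_mgf_le:
  assumes [measurable]: "f \<in> borel_measurable M" and t: "t > 0" and V: "V > 0"
    and mgf: "\<And>l. l > 0 \<Longrightarrow> (\<integral>\<^sup>+ x. ennreal (exp (l * f x)) \<partial>M) \<le> ennreal (exp (l\<^sup>2 * V / 2))"
  shows "prob {x \<in> space M. t \<le> f x} \<le> exp (- (t\<^sup>2 / (2 * V)))"
proof -
  define l where "l = t / V"
  have l: "l > 0"
    using t V by (simp add: l_def)
  have "emeasure M {x \<in> space M. t \<le> f x} \<le>
      ennreal (exp (- l * t)) * (\<integral>\<^sup>+ x. ennreal (exp (l * f x)) * indicator (space M) x \<partial>M)"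
    by (rule Chernoff_ineq_nn_integral_ge[OF l]) auto
  also have "(\<integral>\<^sup>+ x. ennreal (exp (l * f x)) * indicator (space M) x \<partial>M) =
      (\<integral>\<^sup>+ x. ennreal (exp (l * f x)) \<partial>M)"
    by (rule nn_integral_cong) simp
  also have "ennreal (exp (- l * t)) * \<dots> \<le> ennreal (exp (- l * t)) * ennreal (exp (l\<^sup>2 * V / 2))"
    by (intro mult_left_mono mgf l) simp
  also have "\<dots> = ennreal (exp (- (t\<^sup>2 / (2 * V))))"
  proof -
    have "- l * t + l\<^sup>2 * V / 2 = - (t\<^sup>2 / (2 * V))"
      using V by (simp add: l_def field_simps power2_eq_square)
    then show ?thesis
      by (simp flip: ennreal_mult exp_add)
  qed
  finally show ?thesis
    by (simp add: emeasure_eq_measure)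
qed

lemma (in prob_space) prob_abs_ge_le_of_mgf_le:
  assumes [measurable]: "f \<in> borel_measurable M" and "t > 0" "V > 0"
    and mgf: "\<And>\<sigma> l. \<sigma> \<in> {-1, 1} \<Longrightarrow> l > 0 \<Longrightarrow>
      (\<integral>\<^sup>+ x. ennreal (exp (l * (\<sigma> * f x))) \<partial>M) \<le> ennreal (exp (l\<^sup>2 * V / 2))"
  shows "prob {x \<in> space M. t \<le> \<bar>f x\<bar>} \<le> 2 * exp (- (t\<^sup>2 / (2 * V)))"
proof -
  let ?S = "\<lambda>\<sigma>::real. {x \<in> space M. t \<le> \<sigma> * f x}"
  have tail: "prob (?S \<sigma>) \<le> exp (- (t\<^sup>2 / (2 * V)))" if "\<sigma> \<in> {-1, 1}" for \<sigma>
    using assms mgf[OF that] by (intro prob_ge_le_of_mgf_le) auto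
  have "{x \<in> space M. t \<le> \<bar>f x\<bar>} = ?S 1 \<union> ?S (-1)"
    by auto
  moreover have "?S \<sigma> \<in> sets M" for \<sigma>
    by measurable
  ultimately have "prob {x \<in> space M. t \<le> \<bar>f x\<bar>} \<le> prob (?S 1) + prob (?S (-1))"
    by (simp add: measure_subadditive emeasure_finite)
  then show ?thesis
    using tail[of 1] tail[of "-1"] by simp
qed

lemma sum_inverse_le: "1 \<le> m \<Longrightarrow> (\<Sum>k\<in>{m<..n}. 1 / real k) \<le> real (n - m) / real m"
  using sum_bounded_above[of "{m<..n}" "\<lambda>k. 1 / real k" "1 / real m"]
  by (simp add: frac_le)

lemma sum_inverse_le_log2: "(\<Sum>k\<in>{1<..(2::nat)^j}. 1 / real k) \<le> real j"
proof (induction j)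
  case (Suc j)
  have "{1<..(2::nat)^Suc j} = {1<..2^j} \<union> {2^j<..2^Suc j}"
    by auto
  then have "(\<Sum>k\<in>{1<..(2::nat)^Suc j}. 1 / real k) =
      (\<Sum>k\<in>{1<..(2::nat)^j}. 1 / real k) + (\<Sum>k\<in>{2^j<..(2::nat)^Suc j}. 1 / real k)"
    by (simp add: sum.union_disjoint)
  also have "(\<Sum>k\<in>{2^j<..(2::nat)^Suc j}. 1 / real k) \<le> 1"
    using sum_inverse_le[of "2^j" "2^Suc j"] by simp
  finally show ?case
    using Suc by simp
qed simp

lemma tendsto_div_ln_zero:
  fixes f :: "nat \<Rightarrow> real"
  assumes bound: "\<And>r::nat. eventually (\<lambda>n. \<bar>f n\<bar> \<le> c + ln n / real (Suc r)) sequentially"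
  shows "(\<lambda>n. f n / ln n) \<longlonglongrightarrow> 0"
proof (rule tendstoI)
  fix \<delta> :: real
  assume \<delta>: "\<delta> > 0"
  obtain r :: nat where "2 / \<delta> < real r"
    using reals_Archimedean2 by blast
  then have "2 / \<delta> < real (Suc r)"
    by simp
  then have r: "1 / real (Suc r) < \<delta> / 2"
    using \<delta> by (simp add: field_simps)
  have "(\<lambda>n. c / ln (real n)) \<longlonglongrightarrow> 0"
    by real_asymp
  then have "eventually (\<lambda>n. dist (c / ln n) 0 < \<delta> / 2) sequentially"
    using \<delta> by (intro tendstoD) auto
  moreover have "eventually (\<lambda>n. ln (real n) > 0) sequentially"
    by real_asymp
  ultimately show "eventually (\<lambda>n. dist (f n / ln n) 0 < \<delta>) sequentially"
    using bound[of r]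
  proof eventually_elim
    case (elim n)
    then have "\<bar>f n\<bar> / ln n \<le> (c + ln n / real (Suc r)) / ln n"
      by (intro divide_right_mono) auto
    also have "\<dots> = c / ln n + 1 / real (Suc r)"
      using elim by (simp add: add_divide_distrib)
    finally have "\<bar>f n\<bar> / ln n \<le> c / ln n + 1 / real (Suc r)" .
    moreover have "dist (f n / ln n) 0 = \<bar>f n\<bar> / ln n"
      using elim(2) by (simp add: dist_real_def abs_divide)
    moreover have "c / ln n \<le> dist (c / ln n) 0"
      unfolding dist_real_def diff_zero by (rule abs_ge_self)
    ultimately show ?case
      using elim(1) r by linarith
  qed
qed

locale harmonic_subgaussian_process = prob_space +
  fixes X :: "nat \<Rightarrow> 'a \<Rightarrow> real"
  assumes measurable_X [measurable]: "\<And>n. X n \<in> borel_measurable M"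
    and tail_increment: "\<And>m n t W. 1 \<le> m \<Longrightarrow> m \<le> n \<Longrightarrow> 0 < t \<Longrightarrow> 0 < W \<Longrightarrow>
      (\<Sum>k\<in>{m<..n}. 1 / real k) \<le> W \<Longrightarrow>
      prob {x \<in> space M. t \<le> \<bar>X n x - X m x\<bar>} \<le> 2 * exp (- (t\<^sup>2 / (2 * W)))"
begin

definition dyadic_excursion :: "real \<Rightarrow> nat \<Rightarrow> 'a set" where
  "dyadic_excursion e k = {x \<in> space M. e * k \<le> \<bar>X (2^k) x - X 1 x\<bar>} \<union>
    (\<Union>n\<in>{2^k..<2^Suc k}. {x \<in> space M. e * k \<le> \<bar>X n x - X (2^k) x\<bar>})"

lemma sets_dyadic_excursion [measurable]: "dyadic_excursion e k \<in> sets M"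
  unfolding dyadic_excursion_def by measurable

lemma prob_dyadic_excursion_le:
  assumes e: "e > 0" and k: "k \<ge> 1"
  shows "prob (dyadic_excursion e k) \<le>
    2 * exp (- (e\<^sup>2 / 2)) ^ k + 2 ^ k * (2 * exp (- ((e * k)\<^sup>2 / 2)))"
proof -
  have t: "e * k > 0"
    using e k by simp
  have "prob {x \<in> space M. e * k \<le> \<bar>X (2^k) x - X 1 x\<bar>} \<le> 2 * exp (- ((e * k)\<^sup>2 / (2 * real k)))"
    using k sum_inverse_le_log2[of k] by (intro tail_increment t) auto
  also have "(e * k)\<^sup>2 / (2 * real k) = real k * (e\<^sup>2 / 2)"
    using k by (simp add: power2_eq_square)
  finally have first: "prob {x \<in> space M. e * k \<le> \<bar>X (2^k) x - X 1 x\<bar>} \<le> 2 * exp (- (e\<^sup>2 / 2)) ^ k"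
    by (simp add: exp_of_nat_mult[symmetric])
  have block: "prob {x \<in> space M. e * k \<le> \<bar>X n x - X (2^k) x\<bar>} \<le> 2 * exp (- ((e * k)\<^sup>2 / 2))"
    if n: "n \<in> {2^k..<2^Suc k}" for n
  proof -
    have "(\<Sum>j\<in>{2^k<..n}. 1 / real j) \<le> real (n - 2^k) / real ((2::nat)^k)"
      by (rule sum_inverse_le) simp
    also have "\<dots> \<le> 1"
      using n of_nat_mono[of n "2 * 2^k", where 'a = real] by (simp add: of_nat_diff)
    finally show ?thesis
      using n by (intro order.trans[OF tail_increment[OF _ _ t]]) auto
  qed
  have sets: "{x \<in> space M. a \<le> \<bar>X n x - X m x\<bar>} \<in> events" for a n m
    by measurable
  have "prob (dyadic_excursion e k) \<le> prob {x \<in> space M. e * k \<le> \<bar>X (2^k) x - X 1 x\<bar>} +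
      (\<Sum>n\<in>{2^k..<2^Suc k}. prob {x \<in> space M. e * k \<le> \<bar>X n x - X (2^k) x\<bar>})"
    unfolding dyadic_excursion_def
    by (intro order.trans[OF measure_subadditive] add_left_mono finite_measure_subadditive_finite)
      (simp_all add: emeasure_finite image_subset_iff sets)
  also have "\<dots> \<le> 2 * exp (- (e\<^sup>2 / 2)) ^ k +
      (\<Sum>n\<in>{(2::nat)^k..<2^Suc k}. 2 * exp (- ((e * k)\<^sup>2 / 2)))"
    using first block by (intro add_mono sum_mono) auto
  finally show ?thesis
    by simp
qed

lemma summable_prob_dyadic_excursion:
  assumes e: "e > 0"
  shows "summable (\<lambda>k. prob (dyadic_excursion e k))"
proof -
  obtain K :: nat where K: "real K \<ge> 4 / e\<^sup>2"
    using real_arch_simple by blast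
  define q where "q = 2 * exp (- 2::real)"
  have "3 \<le> exp (2::real)"
    using exp_ge_add_one_self[of "2::real"] by simp
  then have q: "\<bar>q\<bar> < 1"
    by (simp add: q_def exp_minus field_simps)
  have geom: "summable (\<lambda>k. 2 * exp (- (e\<^sup>2 / 2)) ^ k + 2 * q ^ k)"
    using e q by (intro summable_add summable_mult summable_geometric) auto
  show ?thesis
  proof (rule summable_comparison_test'[OF geom])
    fix k
    assume k: "k \<ge> Suc K"
    have "e\<^sup>2 * real k \<ge> e\<^sup>2 * (4 / e\<^sup>2)"
      using K k by (intro mult_left_mono) auto
    then have "real k * (e\<^sup>2 * real k) \<ge> real k * 4"
      using e by (intro mult_left_mono) auto
    then have "(e * k)\<^sup>2 / 2 \<ge> 2 * real k"
      by (simp add: power2_eq_square algebra_simps)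
    then have "exp (- ((e * k)\<^sup>2 / 2)) \<le> exp (- 2) ^ k"
      by (simp add: exp_of_nat_mult[symmetric])
    then have "2 ^ k * (2 * exp (- ((e * k)\<^sup>2 / 2))) \<le> 2 * q ^ k"
      by (simp add: q_def power_mult_distrib)
    then show "norm (prob (dyadic_excursion e k)) \<le> 2 * exp (- (e\<^sup>2 / 2)) ^ k + 2 * q ^ k"
      using prob_dyadic_excursion_le[OF e, of k] k by simp
  qed
qed

lemma AE_eventually_abs_le_ln:
  assumes e: "e > 0"
  shows "AE x in M. eventually (\<lambda>n. \<bar>X n x\<bar> \<le> \<bar>X 1 x\<bar> + e * ln n) sequentially"
proof -
  define e' where "e' = e * ln 2 / 2"
  have e': "e' > 0"
    using e by (simp add: e'_def)
  have "AE x in M. eventually (\<lambda>k. x \<in> space M - dyadic_excursion e' k) sequentially"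
    using summable_prob_dyadic_excursion[OF e']
    by (intro borel_cantelli_AE1) (simp_all add: emeasure_eq_measure)
  then show ?thesis
  proof eventually_elim
    case (elim x)
    then obtain K where K: "\<And>k. k \<ge> K \<Longrightarrow> x \<in> space M - dyadic_excursion e' k"
      unfolding eventually_sequentially by blast
    have "\<bar>X n x\<bar> \<le> \<bar>X 1 x\<bar> + e * ln n" if n: "n \<ge> 2^K" for n
    proof -
      have "n \<ge> 1"
        using n one_le_power[of "2::nat" K] by linarith
      then obtain k where k: "2^k \<le> n" "n < 2^Suc k"
        using ex_power_ivl1[of 2 n] by auto
      then have "K < Suc k"
        using n power_less_imp_less_exp[of "2::nat" K "Suc k"] by simp
      then have "x \<in> space M" "x \<notin> dyadic_excursion e' k"
        using K by auto
      then have "\<bar>X (2^k) x - X 1 x\<bar> < e' * k" "\<bar>X n x - X (2^k) x\<bar> < e' * k"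
        using k unfolding dyadic_excursion_def by (auto simp: not_le)
      moreover have "real k * ln 2 \<le> ln n"
        using k(1) ln_mono[of "2 ^ k" n] by (simp add: ln_realpow)
      then have "2 * (e' * k) \<le> e * ln n"
        using e by (simp add: e'_def mult.commute)
      ultimately show ?thesis
        by linarith
    qed
    then show ?case
      unfolding eventually_sequentially by blast
  qed
qed

lemma AE_tendsto_div_ln: "AE x in M. (\<lambda>n. X n x / ln n) \<longlonglongrightarrow> 0"
proof -
  have "AE x in M. \<forall>r::nat. eventually (\<lambda>n. \<bar>X n x\<bar> \<le> \<bar>X 1 x\<bar> + ln n / real (Suc r)) sequentially"
    unfolding AE_all_countable using AE_eventually_abs_le_ln[of "1 / real (Suc _)"] by simp
  then show ?thesis
  proof eventually_elim
    case (elim x)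
    then show ?case
      by (intro tendsto_div_ln_zero[of _ "\<bar>X 1 x\<bar>"]) blast
  qed
qed

end

section \<open>The coordinate martingales at the critical memory parameter\<close>

fun merw_scale :: "nat \<Rightarrow> real" where
  "merw_scale 0 = 1"
| "merw_scale (Suc n) = merw_scale n * (if n = 0 then 1 else 1 + 1 / (2 * real n))"

lemma merw_scale_pos: "merw_scale n > 0"
  by (induction n) (simp_all add: add_pos_nonneg)

lemma merw_scale_Suc: "n \<ge> 1 \<Longrightarrow> merw_scale (Suc n) = merw_scale n * (1 + 1 / (2 * real n))"
  by simp

declare merw_scale.simps(2) [simp del]

lemma real_le_merw_scale_sq: "n \<ge> 1 \<Longrightarrow> real n \<le> (merw_scale n)\<^sup>2"
proof (induction n rule: nat_induct_at_least)
  case (Suc n)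
  have "real (Suc n) \<le> real n * (1 + 1 / (2 * real n))\<^sup>2"
    using Suc by (simp add: field_simps power2_eq_square)
  also have "\<dots> \<le> (merw_scale n)\<^sup>2 * (1 + 1 / (2 * real n))\<^sup>2"
    using Suc by (intro mult_right_mono) auto
  finally show ?case
    using Suc by (simp add: merw_scale_Suc power_mult_distrib)
qed (simp add: merw_scale.simps)

lemma merw_scale_sq_le: "n \<ge> 1 \<Longrightarrow> (merw_scale n)\<^sup>2 \<le> 2 * real n - 1 / 2"
proof (induction n rule: nat_induct_at_least)
  case (Suc n)
  have "(merw_scale (Suc n))\<^sup>2 = (merw_scale n)\<^sup>2 * (1 + 1 / (2 * real n))\<^sup>2"
    using Suc by (simp add: merw_scale_Suc power_mult_distrib)
  also have "\<dots> \<le> (2 * real n - 1 / 2) * (1 + 1 / (2 * real n))\<^sup>2"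
    using Suc by (intro mult_right_mono) auto
  also have "\<dots> \<le> 2 * real (Suc n) - 1 / 2"
    using Suc by (simp add: field_simps power2_eq_square)
  finally show ?case .
qed (simp add: merw_scale.simps)

lemma merw_scale_le_sqrt: "n \<ge> 1 \<Longrightarrow> merw_scale n \<le> sqrt (2 * real n)"
  using merw_scale_sq_le[of n] merw_scale_pos[of n] by (intro real_le_rsqrt) auto

definition merw_mart :: "nat \<Rightarrow> nat \<Rightarrow> nat \<Rightarrow> vec \<times> (nat \<Rightarrow> nat \<times> mat) \<Rightarrow> real" where
  "merw_mart d i n w = merw_pos d w n i / merw_scale n"

lemma measurable_merw_mart [measurable]: "merw_mart d i n \<in> borel_measurable (merw_space d p)"
  unfolding merw_mart_def by measurable

lemma merw_mart_resample: "k \<le> n \<Longrightarrow> merw_mart d i k (resample w n y) = merw_mart d i k w"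
  by (simp add: merw_mart_def merw_pos_resample)

lemma merw_mart_Suc_resample:
  "n \<ge> 1 \<Longrightarrow> merw_mart d i (Suc n) (resample w n y) =
    (merw_pos d w n i + mat_vec d (snd y) (merw_steps d w n ! (fst y - 1)) i) / merw_scale (Suc n)"
  by (simp add: merw_mart_def merw_pos_Suc merw_pos_resample merw_next_resample)

lemma expectation_merw_mart_step:
  fixes xs :: "vec list"
  assumes d: "d \<ge> 1" and i: "i < d" and n: "n \<ge> 1"
  defines "Y \<equiv> \<Sum>j<n. (xs ! j) i"
  shows "measure_pmf.expectation (step_pmf d (p_crit d) n)
      (\<lambda>y. (Y + mat_vec d (snd y) (xs ! (fst y - 1)) i) / merw_scale (Suc n)) = Y / merw_scale n"
proof -
  define P where "P = step_pmf d (p_crit d) n"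
  define \<xi> where "\<xi> = (\<lambda>y::nat \<times> mat. mat_vec d (snd y) (xs ! (fst y - 1)) i)"
  have "measure_pmf.expectation P \<xi> = memory_drift d (p_crit d) * Y / n"
    using p_crit_bounds[OF d] unfolding P_def \<xi>_def Y_def
    by (intro step_pmf_expectation_next d i n) auto
  then have "measure_pmf.expectation P \<xi> = Y / (2 * n)"
    by (simp add: memory_drift_p_crit[OF d])
  moreover have "integrable (measure_pmf P) \<xi>"
    unfolding P_def by (simp add: integrable_measure_pmf_finite finite_set_A_pmf set_step_pmf)
  ultimately have "measure_pmf.expectation P (\<lambda>y. (Y + \<xi> y) / merw_scale (Suc n)) =
      (Y + Y / (2 * n)) / merw_scale (Suc n)"
    by (simp add: Bochner_Integration.integral_add)
  also have "\<dots> = Y * (1 + 1 / (2 * n)) / (merw_scale n * (1 + 1 / (2 * n)))"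
    using n by (simp add: merw_scale_Suc distrib_left)
  also have "\<dots> = Y / merw_scale n"
    using add_pos_nonneg[of 1 "1 / (2 * real n)"] by simp
  finally show ?thesis
    unfolding P_def \<xi>_def .
qed

lemma mgf_merw_mart_increment_le:
  assumes d: "d \<ge> 1" and i: "i < d" and n: "n \<ge> 1"
    and units: "\<And>j. j < n \<Longrightarrow> signed_unit d (xs ! j)" and l: "l > 0" and \<sigma>: "\<sigma> \<in> {-1, 1}"
  defines "Y \<equiv> \<Sum>j<n. (xs ! j) i"
  shows "(\<integral>\<^sup>+ y. ennreal (exp (l * (\<sigma> * ((Y + mat_vec d (snd y) (xs ! (fst y - 1)) i) /
        merw_scale (Suc n) - Y / merw_scale n)))) \<partial>measure_pmf (step_pmf d (p_crit d) n))
      \<le> ennreal (exp (l\<^sup>2 / (2 * (merw_scale (Suc n))\<^sup>2)))"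
proof -
  define P where "P = step_pmf d (p_crit d) n"
  define g' where "g' = merw_scale (Suc n)"
  define h where "h = (\<lambda>y::nat \<times> mat. \<sigma> * ((Y + mat_vec d (snd y) (xs ! (fst y - 1)) i) / g'))"
  have "\<bar>h y - \<sigma> * (Y / g')\<bar> \<le> 1 / g'" if "y \<in> set_pmf P" for y
  proof -
    have "\<bar>mat_vec d (snd y) (xs ! (fst y - 1)) i\<bar> \<le> 1"
      using that n units unfolding P_def
      by (intro signed_unit_abs_le_1[of d] signed_unit_mat_vec_A_pmf)
        (auto simp: set_step_pmf mem_Times_iff)
    then show ?thesis
      using merw_scale_pos[of "Suc n"] \<sigma>
      by (auto simp: h_def g'_def diff_divide_distrib[symmetric] abs_divide divide_right_mono
          simp flip: right_diff_distrib)
  qed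
  then have mgf: "(\<integral>\<^sup>+ y. ennreal (exp (l * (h y - measure_pmf.expectation P h))) \<partial>P)
      \<le> ennreal (exp (l\<^sup>2 * (1 / g')\<^sup>2 / 2))"
    by (rule nn_integral_exp_centered_pmf_le[OF _ l])
  have "measure_pmf.expectation P h =
      \<sigma> * measure_pmf.expectation P (\<lambda>y. (Y + mat_vec d (snd y) (xs ! (fst y - 1)) i) / g')"
    unfolding h_def by (rule integral_mult_right_zero)
  then have mean: "measure_pmf.expectation P h = \<sigma> * (Y / merw_scale n)"
    unfolding P_def g'_def Y_def by (simp only: expectation_merw_mart_step[OF d i n])
  have "(\<integral>\<^sup>+ y. ennreal (exp (l * (h y - \<sigma> * (Y / merw_scale n)))) \<partial>P)
      \<le> ennreal (exp (l\<^sup>2 / (2 * g'\<^sup>2)))"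
    using mgf unfolding mean by (simp add: power_divide mult.commute)
  then show ?thesis
    unfolding P_def h_def g'_def by (simp only: right_diff_distrib)
qed

lemma nn_integral_resample_merw_mart_le:
  assumes d: "d \<ge> 1" and i: "i < d" and m: "1 \<le> m" "m \<le> n" and l: "l > 0" and \<sigma>: "\<sigma> \<in> {-1, 1}"
    and w: "in_merw_support d p w"
  shows "(\<integral>\<^sup>+ y. ennreal (exp (l * (\<sigma> * (merw_mart d i (Suc n) (resample w n y) -
        merw_mart d i m (resample w n y))))) \<partial>measure_pmf (step_pmf d (p_crit d) n))
      \<le> ennreal (exp (l * (\<sigma> * (merw_mart d i n w - merw_mart d i m w)))) *
        ennreal (exp (l\<^sup>2 / (2 * (merw_scale (Suc n))\<^sup>2)))"
proof -
  let ?xs = "merw_steps d w n"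
  let ?Y = "\<Sum>j<n. (?xs ! j) i"
  let ?inc = "\<lambda>y. exp (l * (\<sigma> * ((?Y + mat_vec d (snd y) (?xs ! (fst y - 1)) i) /
      merw_scale (Suc n) - ?Y / merw_scale n)))"
  have n: "n \<ge> 1"
    using m by simp
  have "merw_mart d i (Suc n) (resample w n y) =
      (?Y + mat_vec d (snd y) (?xs ! (fst y - 1)) i) / merw_scale (Suc n)" for y
    using n by (simp add: merw_mart_Suc_resample merw_pos_eq_sum)
  moreover have "merw_mart d i m (resample w n y) = merw_mart d i m w" for y
    using m by (simp add: merw_mart_resample)
  moreover have "merw_mart d i n w = ?Y / merw_scale n"
    by (simp add: merw_mart_def merw_pos_eq_sum)
  ultimately have "exp (l * (\<sigma> * (merw_mart d i (Suc n) (resample w n y) -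
      merw_mart d i m (resample w n y)))) =
      exp (l * (\<sigma> * (merw_mart d i n w - merw_mart d i m w))) * ?inc y" for y
    by (simp add: algebra_simps flip: exp_add)
  then have "(\<integral>\<^sup>+ y. ennreal (exp (l * (\<sigma> * (merw_mart d i (Suc n) (resample w n y) -
        merw_mart d i m (resample w n y))))) \<partial>measure_pmf (step_pmf d (p_crit d) n)) =
      ennreal (exp (l * (\<sigma> * (merw_mart d i n w - merw_mart d i m w)))) *
        (\<integral>\<^sup>+ y. ennreal (?inc y) \<partial>measure_pmf (step_pmf d (p_crit d) n))"
    by (simp add: ennreal_mult nn_integral_cmult)
  also have "\<dots> \<le> ennreal (exp (l * (\<sigma> * (merw_mart d i n w - merw_mart d i m w)))) *
      ennreal (exp (l\<^sup>2 / (2 * (merw_scale (Suc n))\<^sup>2)))"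
    using signed_unit_merw_steps[OF d w]
    by (intro mult_left_mono mgf_merw_mart_increment_le d i n l \<sigma>) auto
  finally show ?thesis .
qed

lemma mgf_merw_mart_diff_le:
  assumes d: "d \<ge> 1" and i: "i < d" and m: "1 \<le> m" "m \<le> n" and l: "l > 0" and \<sigma>: "\<sigma> \<in> {-1, 1}"
  shows "(\<integral>\<^sup>+ w. ennreal (exp (l * (\<sigma> * (merw_mart d i n w - merw_mart d i m w))))
      \<partial>merw_space d (p_crit d)) \<le> ennreal (exp (l\<^sup>2 / 2 * (\<Sum>k\<in>{m<..n}. 1 / real k)))"
  using m(2)
proof (induction n rule: dec_induct)
  case base
  interpret prob_space "merw_space d (p_crit d)"
    by (rule prob_space_merw_space)
  show ?case
    by (simp add: emeasure_space_1)
next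
  case (step n)
  let ?P = "merw_space d (p_crit d)"
  let ?E = "\<lambda>n w. ennreal (exp (l * (\<sigma> * (merw_mart d i n w - merw_mart d i m w))))"
  define c where "c = ennreal (exp (l\<^sup>2 / (2 * (merw_scale (Suc n))\<^sup>2)))"
  have "(\<integral>\<^sup>+ w. ?E (Suc n) w \<partial>?P) =
      (\<integral>\<^sup>+ w. (\<integral>\<^sup>+ y. ?E (Suc n) (resample w n y) \<partial>measure_pmf (step_pmf d (p_crit d) n)) \<partial>?P)"
    unfolding merw_space_def
    by (rule nn_integral_resample) (auto simp: prob_space_measure_pmf simp flip: merw_space_def)
  also have "\<dots> \<le> (\<integral>\<^sup>+ w. ?E n w * c \<partial>?P)"
    unfolding c_def using step m
    by (intro nn_integral_mono_AE eventually_mono[OF AE_in_merw_support]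
        nn_integral_resample_merw_mart_le[OF d i _ _ l \<sigma>]) auto
  also have "\<dots> = (\<integral>\<^sup>+ w. ?E n w \<partial>?P) * c"
    by (rule nn_integral_multc) measurable
  also have "\<dots> \<le> ennreal (exp (l\<^sup>2 / 2 * (\<Sum>k\<in>{m<..n}. 1 / real k))) * c"
    by (intro mult_right_mono step.IH) auto
  also have "\<dots> \<le> ennreal (exp (l\<^sup>2 / 2 * (\<Sum>k\<in>{m<..Suc n}. 1 / real k)))"
  proof -
    have "l\<^sup>2 / 2 * (1 / (merw_scale (Suc n))\<^sup>2) \<le> l\<^sup>2 / 2 * (1 / real (Suc n))"
      using real_le_merw_scale_sq[of "Suc n"] merw_scale_pos[of "Suc n"]
      by (intro mult_left_mono divide_left_mono) simp_all
    then have "l\<^sup>2 / (2 * (merw_scale (Suc n))\<^sup>2) \<le> l\<^sup>2 / 2 * (1 / real (Suc n))"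
      by simp
    moreover have "{m<..Suc n} = insert (Suc n) {m<..n}"
      using step by auto
    ultimately show ?thesis
      unfolding c_def by (simp add: distrib_left flip: ennreal_mult exp_add)
  qed
  finally show ?case .
qed

lemma harmonic_subgaussian_process_merw_mart:
  assumes "d \<ge> 1" "i < d"
  shows "harmonic_subgaussian_process (merw_space d (p_crit d)) (merw_mart d i)"
proof (intro harmonic_subgaussian_process.intro harmonic_subgaussian_process_axioms.intro
    prob_space_merw_space)
  interpret prob_space "merw_space d (p_crit d)"
    by (rule prob_space_merw_space)
  fix m n :: nat and t W :: real
  assume m: "1 \<le> m" "m \<le> n" and "0 < t" "0 < W" and W: "(\<Sum>k\<in>{m<..n}. 1 / real k) \<le> W"
  have "(\<integral>\<^sup>+ w. ennreal (exp (l * (\<sigma> * (merw_mart d i n w - merw_mart d i m w))))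
      \<partial>merw_space d (p_crit d)) \<le> ennreal (exp (l\<^sup>2 * W / 2))" if "\<sigma> \<in> {-1, 1}" "l > 0" for \<sigma> l
    using mgf_merw_mart_diff_le[OF assms m that(2,1)] W that(2)
    by (elim order.trans) (simp add: mult_left_mono)
  then show "measure (merw_space d (p_crit d))
      {w \<in> space (merw_space d (p_crit d)). t \<le> \<bar>merw_mart d i n w - merw_mart d i m w\<bar>}
      \<le> 2 * exp (- (t\<^sup>2 / (2 * W)))"
    using \<open>0 < t\<close> \<open>0 < W\<close> by (intro prob_abs_ge_le_of_mgf_le) auto
qed simp

lemma AE_merw_pos_coord_tendsto:
  assumes "d \<ge> 1" "i < d"
  shows "AE w in merw_space d (p_crit d). (\<lambda>n. merw_pos d w n i / (sqrt n * ln n)) \<longlonglongrightarrow> 0"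
proof -
  interpret harmonic_subgaussian_process "merw_space d (p_crit d)" "merw_mart d i"
    using assms by (rule harmonic_subgaussian_process_merw_mart)
  show ?thesis
    using AE_tendsto_div_ln
  proof eventually_elim
    case (elim w)
    have bound: "\<bar>merw_pos d w n i / (sqrt n * ln n)\<bar> \<le> sqrt 2 * \<bar>merw_mart d i n w / ln n\<bar>"
      if "n \<ge> 1" for n
    proof -
      have "\<bar>merw_pos d w n i\<bar> = \<bar>merw_mart d i n w\<bar> * merw_scale n"
        using merw_scale_pos[of n] by (simp add: merw_mart_def abs_mult)
      also have "\<dots> \<le> \<bar>merw_mart d i n w\<bar> * (sqrt 2 * sqrt n)"
        using merw_scale_le_sqrt[OF that] by (intro mult_left_mono) (auto simp: real_sqrt_mult)
      finally have "\<bar>merw_pos d w n i\<bar> / (sqrt n * ln n) \<le>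
          \<bar>merw_mart d i n w\<bar> * (sqrt 2 * sqrt n) / (sqrt n * ln n)"
        using that by (intro divide_right_mono) auto
      then show ?thesis
        using that by (simp add: abs_divide abs_mult mult_ac)
    qed
    then have "eventually (\<lambda>n. norm (merw_pos d w n i / (sqrt n * ln n)) \<le>
        sqrt 2 * \<bar>merw_mart d i n w / ln n\<bar>) sequentially"
      unfolding real_norm_def eventually_sequentially by blast
    moreover have "(\<lambda>n. sqrt 2 * \<bar>merw_mart d i n w / ln n\<bar>) \<longlonglongrightarrow> 0"
      using elim by (intro tendsto_mult_right_zero tendsto_rabs_zero)
    ultimately show ?case
      by (rule Lim_null_comparison)
  qed
qed

lemma abs_vnorm_div_le: "\<bar>vnorm d v / c\<bar> \<le> (\<Sum>i<d. \<bar>v i / c\<bar>)"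
proof -
  have "vnorm d v \<le> (\<Sum>i<d. \<bar>v i\<bar>)"
    using L2_set_le_sum_abs[of v "{..<d}"] by (simp add: vnorm_def L2_set_def)
  moreover have "vnorm d v \<ge> 0"
    by (simp add: vnorm_def sum_nonneg)
  ultimately show ?thesis
    by (simp add: abs_divide divide_right_mono flip: sum_divide_distrib)
qed

theorem theorem3p4:
  fixes d :: nat
  assumes "d \<ge> 1"
  shows "AE w in merw_space d ((2 * real d + 1) / (4 * real d)).
           (\<lambda>n. vnorm d (merw_pos d w n) / (sqrt (real n) * ln (real n))) \<longlonglongrightarrow> 0"
proof -
  have "AE w in merw_space d (p_crit d).
      \<forall>i\<in>{..<d}. (\<lambda>n. merw_pos d w n i / (sqrt n * ln n)) \<longlonglongrightarrow> 0"
    using AE_merw_pos_coord_tendsto[OF assms] by (intro AE_finite_allI) auto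
  then show ?thesis
  proof eventually_elim
    case (elim w)
    have "eventually (\<lambda>n. norm (vnorm d (merw_pos d w n) / (sqrt n * ln n)) \<le>
        (\<Sum>i<d. \<bar>merw_pos d w n i / (sqrt n * ln n)\<bar>)) sequentially"
      unfolding real_norm_def by (intro always_eventually allI abs_vnorm_div_le)
    moreover have "(\<lambda>n. \<Sum>i<d. \<bar>merw_pos d w n i / (sqrt n * ln n)\<bar>) \<longlonglongrightarrow> 0"
      using elim by (intro tendsto_null_sum tendsto_rabs_zero) auto
    ultimately show ?case
      by (rule Lim_null_comparison)
  qed
qed

end
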